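(* For every locale $X$, the category $FrmSh(X)$ of frame sheaves on $X$ and frame morphisms is equivalent to the coslice category $\mathcal{O}(X)/Frm$ of frames under $\mathcal{O}(X)$. The equivalence is given by the functor $\Phi:\mathcal{O}(X)/Frm\to FrmSh(X)$ sending a frame homomorphism $f:\mathcal{O}(X)\to L$ to the sheaf $\Phi(f)(u)=\{x\in L\mid x\le f(u)\}$ with restriction maps $x\mapsto x\wedge f(v)$ ($v\le u$), and a morphism $h:L\to M$ with $hf=g$ to its restrictions $\Phi(f)(u)\to\Phi(g)(u)$; a quasi-inverse is $\Psi:FrmSh(X)\to\mathcal{O}(X)/Frm$, $\Psi(F)=F(1_X)$ with the frame homomorphism $u\mapsto l_{u,1_X}(\top_{F(u)})$, and $\Psi(\alpha)=\alpha_{1_X}$.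
   Context: Let $X$ be a locale with frame of opens $\mathcal{O}(X)$ and top $1_X$. A posheaf on $X$ is a sheaf of sets $F$ with (POS1) each $F(u)$ a poset; (POS2) restriction maps $F(u)\to F(v)$, $x\mapsto x|_v$ ($v\le u$), order-preserving; (POS3) if $u=\bigvee_i u_i$ and $s,t\in F(u)$ satisfy $s|_{u_i}\le t|_{u_i}$ for all $i$, then $s\le t$. A frame sheaf is a posheaf $F$ such that each $F(u)$ is a frame, each restriction map $F(u)\to F(v)$ ($v\le u$) is surjective and has a left adjoint $l_{v,u}:F(v)\to F(u)$ and a right adjoint, and $x\wedge l_{v,u}(y)=l_{v,u}(x|_v\wedge y)$ for $x\in F(u)$, $y\in F(v)$. A frame morphism $\alpha:F\to G$ of frame sheaves is a morphism of sheaves such that each $\alpha_u$ is a frame homomorphism and $\alpha_u\circ l^F_{v,u}=l^G_{v,u}\circ\alpha_v$ for all $v\le u$. $\top_{F(u)}$ is the top element of $F(u)$. Objects of $\mathcal{O}(X)/Frm$ are frame homomorphisms $f:\mathcal{O}(X)\to L$; morphisms $f\to g$ (with $g:\mathcal{O}(X)\to M$) are frame homomorphisms $h:L\to M$ with $hf=g$. *)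

theory Defs
  imports Main
begin

definition poset_on :: "'a set \<Rightarrow> ('a \<Rightarrow> 'a \<Rightarrow> bool) \<Rightarrow> bool" where
  "poset_on A le \<longleftrightarrow>
     (\<forall>x\<in>A. le x x) \<and>
     (\<forall>x\<in>A. \<forall>y\<in>A. le x y \<and> le y x \<longrightarrow> x = y) \<and>
     (\<forall>x\<in>A. \<forall>y\<in>A. \<forall>z\<in>A. le x y \<and> le y z \<longrightarrow> le x z)"

definition is_lub :: "'a set \<Rightarrow> ('a \<Rightarrow> 'a \<Rightarrow> bool) \<Rightarrow> 'a set \<Rightarrow> 'a \<Rightarrow> bool" where
  "is_lub A le S x \<longleftrightarrow> x \<in> A \<and> (\<forall>s\<in>S. le s x) \<and> (\<forall>y\<in>A. (\<forall>s\<in>S. le s y) \<longrightarrow> le x y)"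

definition is_glb :: "'a set \<Rightarrow> ('a \<Rightarrow> 'a \<Rightarrow> bool) \<Rightarrow> 'a set \<Rightarrow> 'a \<Rightarrow> bool" where
  "is_glb A le S x \<longleftrightarrow> x \<in> A \<and> (\<forall>s\<in>S. le x s) \<and> (\<forall>y\<in>A. (\<forall>s\<in>S. le y s) \<longrightarrow> le y x)"

definition lub :: "'a set \<Rightarrow> ('a \<Rightarrow> 'a \<Rightarrow> bool) \<Rightarrow> 'a set \<Rightarrow> 'a" where
  "lub A le S = (THE x. is_lub A le S x)"

definition glb :: "'a set \<Rightarrow> ('a \<Rightarrow> 'a \<Rightarrow> bool) \<Rightarrow> 'a set \<Rightarrow> 'a" where
  "glb A le S = (THE x. is_glb A le S x)"

definition meet :: "'a set \<Rightarrow> ('a \<Rightarrow> 'a \<Rightarrow> bool) \<Rightarrow> 'a \<Rightarrow> 'a \<Rightarrow> 'a" where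
  "meet A le x y = glb A le {x, y}"

definition top_of :: "'a set \<Rightarrow> ('a \<Rightarrow> 'a \<Rightarrow> bool) \<Rightarrow> 'a" where
  "top_of A le = lub A le A"

definition complete_lattice_on :: "'a set \<Rightarrow> ('a \<Rightarrow> 'a \<Rightarrow> bool) \<Rightarrow> bool" where
  "complete_lattice_on A le \<longleftrightarrow> poset_on A le \<and> (\<forall>S\<subseteq>A. \<exists>x. is_lub A le S x)"

definition frame_on :: "'a set \<Rightarrow> ('a \<Rightarrow> 'a \<Rightarrow> bool) \<Rightarrow> bool" where
  "frame_on A le \<longleftrightarrow> complete_lattice_on A le \<and>
     (\<forall>x\<in>A. \<forall>S\<subseteq>A. meet A le x (lub A le S) = lub A le ((\<lambda>s. meet A le x s) ` S))"

definition frame_hom ::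
  "'a set \<Rightarrow> ('a \<Rightarrow> 'a \<Rightarrow> bool) \<Rightarrow> 'b set \<Rightarrow> ('b \<Rightarrow> 'b \<Rightarrow> bool) \<Rightarrow> ('a \<Rightarrow> 'b) \<Rightarrow> bool" where
  "frame_hom A leA B leB f \<longleftrightarrow>
     (\<forall>x\<in>A. f x \<in> B) \<and>
     f (top_of A leA) = top_of B leB \<and>
     (\<forall>x\<in>A. \<forall>y\<in>A. f (meet A leA x y) = meet B leB (f x) (f y)) \<and>
     (\<forall>S\<subseteq>A. f (lub A leA S) = lub B leB (f ` S))"

text \<open>A (pre)sheaf is given by sets F u (u in Opn) and restriction maps res u v : F u \<rightarrow> F v
  for v \<le> u, written res u v x = x|_v.\<close>

definition presheaf_on ::
  "'o set \<Rightarrow> ('o \<Rightarrow> 'o \<Rightarrow> bool) \<Rightarrow> ('o \<Rightarrow> 'a set) \<Rightarrow> ('o \<Rightarrow> 'o \<Rightarrow> 'a \<Rightarrow> 'a) \<Rightarrow> bool" where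
  "presheaf_on Opn leO F res \<longleftrightarrow>
     (\<forall>u\<in>Opn. \<forall>v\<in>Opn. leO v u \<longrightarrow> (\<forall>x\<in>F u. res u v x \<in> F v)) \<and>
     (\<forall>u\<in>Opn. \<forall>x\<in>F u. res u u x = x) \<and>
     (\<forall>u\<in>Opn. \<forall>v\<in>Opn. \<forall>w\<in>Opn. leO w v \<and> leO v u \<longrightarrow>
        (\<forall>x\<in>F u. res v w (res u v x) = res u w x))"

definition sheaf_on ::
  "'o set \<Rightarrow> ('o \<Rightarrow> 'o \<Rightarrow> bool) \<Rightarrow> ('o \<Rightarrow> 'a set) \<Rightarrow> ('o \<Rightarrow> 'o \<Rightarrow> 'a \<Rightarrow> 'a) \<Rightarrow> bool" where
  "sheaf_on Opn leO F res \<longleftrightarrow> presheaf_on Opn leO F res \<and>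
     (\<forall>u\<in>Opn. \<forall>U\<subseteq>Opn. lub Opn leO U = u \<longrightarrow>
        (\<forall>s. (\<forall>w\<in>U. s w \<in> F w) \<and>
             (\<forall>w\<in>U. \<forall>w'\<in>U. res w (meet Opn leO w w') (s w) = res w' (meet Opn leO w w') (s w'))
           \<longrightarrow> (\<exists>!x. x \<in> F u \<and> (\<forall>w\<in>U. res u w x = s w))))"

definition posheaf_on ::
  "'o set \<Rightarrow> ('o \<Rightarrow> 'o \<Rightarrow> bool) \<Rightarrow> ('o \<Rightarrow> 'a set) \<Rightarrow> ('o \<Rightarrow> 'a \<Rightarrow> 'a \<Rightarrow> bool)
     \<Rightarrow> ('o \<Rightarrow> 'o \<Rightarrow> 'a \<Rightarrow> 'a) \<Rightarrow> bool" where
  "posheaf_on Opn leO F le res \<longleftrightarrow> sheaf_on Opn leO F res \<and>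
     (\<forall>u\<in>Opn. poset_on (F u) (le u)) \<and>
     (\<forall>u\<in>Opn. \<forall>v\<in>Opn. leO v u \<longrightarrow>
        (\<forall>x\<in>F u. \<forall>y\<in>F u. le u x y \<longrightarrow> le v (res u v x) (res u v y))) \<and>
     (\<forall>u\<in>Opn. \<forall>U\<subseteq>Opn. lub Opn leO U = u \<longrightarrow>
        (\<forall>s\<in>F u. \<forall>t\<in>F u. (\<forall>w\<in>U. le w (res u w s) (res u w t)) \<longrightarrow> le u s t))"

text \<open>The left adjoint l_{v,u} : F v \<rightarrow> F u of restriction F u \<rightarrow> F v (when it exists):
  l(y) is the least x in F u with y \<le> x|_v.\<close>
definition ladj ::
  "('o \<Rightarrow> 'a set) \<Rightarrow> ('o \<Rightarrow> 'a \<Rightarrow> 'a \<Rightarrow> bool) \<Rightarrow> ('o \<Rightarrow> 'o \<Rightarrow> 'a \<Rightarrow> 'a)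
     \<Rightarrow> 'o \<Rightarrow> 'o \<Rightarrow> 'a \<Rightarrow> 'a" where
  "ladj F le res v u y =
     (THE x. x \<in> F u \<and> le v y (res u v x) \<and> (\<forall>z\<in>F u. le v y (res u v z) \<longrightarrow> le u x z))"

definition is_left_adjoint ::
  "('o \<Rightarrow> 'a set) \<Rightarrow> ('o \<Rightarrow> 'a \<Rightarrow> 'a \<Rightarrow> bool) \<Rightarrow> ('o \<Rightarrow> 'o \<Rightarrow> 'a \<Rightarrow> 'a)
     \<Rightarrow> 'o \<Rightarrow> 'o \<Rightarrow> ('a \<Rightarrow> 'a) \<Rightarrow> bool" where
  "is_left_adjoint F le res v u l \<longleftrightarrow>
     (\<forall>y\<in>F v. l y \<in> F u) \<and>
     (\<forall>y\<in>F v. \<forall>x\<in>F u. le u (l y) x \<longleftrightarrow> le v y (res u v x))"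

definition is_right_adjoint ::
  "('o \<Rightarrow> 'a set) \<Rightarrow> ('o \<Rightarrow> 'a \<Rightarrow> 'a \<Rightarrow> bool) \<Rightarrow> ('o \<Rightarrow> 'o \<Rightarrow> 'a \<Rightarrow> 'a)
     \<Rightarrow> 'o \<Rightarrow> 'o \<Rightarrow> ('a \<Rightarrow> 'a) \<Rightarrow> bool" where
  "is_right_adjoint F le res v u r \<longleftrightarrow>
     (\<forall>y\<in>F v. r y \<in> F u) \<and>
     (\<forall>x\<in>F u. \<forall>y\<in>F v. le v (res u v x) y \<longleftrightarrow> le u x (r y))"

definition frame_sheaf_on ::
  "'o set \<Rightarrow> ('o \<Rightarrow> 'o \<Rightarrow> bool) \<Rightarrow> ('o \<Rightarrow> 'a set) \<Rightarrow> ('o \<Rightarrow> 'a \<Rightarrow> 'a \<Rightarrow> bool)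
     \<Rightarrow> ('o \<Rightarrow> 'o \<Rightarrow> 'a \<Rightarrow> 'a) \<Rightarrow> bool" where
  "frame_sheaf_on Opn leO F le res \<longleftrightarrow> posheaf_on Opn leO F le res \<and>
     (\<forall>u\<in>Opn. frame_on (F u) (le u)) \<and>
     (\<forall>u\<in>Opn. \<forall>v\<in>Opn. leO v u \<longrightarrow>
        res u v ` F u = F v \<and>
        (\<exists>l. is_left_adjoint F le res v u l) \<and>
        (\<exists>r. is_right_adjoint F le res v u r) \<and>
        (\<forall>x\<in>F u. \<forall>y\<in>F v.
           meet (F u) (le u) x (ladj F le res v u y) =
           ladj F le res v u (meet (F v) (le v) (res u v x) y)))"

definition frame_morphism ::
  "'o set \<Rightarrow> ('o \<Rightarrow> 'o \<Rightarrow> bool)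
     \<Rightarrow> ('o \<Rightarrow> 'a set) \<Rightarrow> ('o \<Rightarrow> 'a \<Rightarrow> 'a \<Rightarrow> bool) \<Rightarrow> ('o \<Rightarrow> 'o \<Rightarrow> 'a \<Rightarrow> 'a)
     \<Rightarrow> ('o \<Rightarrow> 'b set) \<Rightarrow> ('o \<Rightarrow> 'b \<Rightarrow> 'b \<Rightarrow> bool) \<Rightarrow> ('o \<Rightarrow> 'o \<Rightarrow> 'b \<Rightarrow> 'b)
     \<Rightarrow> ('o \<Rightarrow> 'a \<Rightarrow> 'b) \<Rightarrow> bool" where
  "frame_morphism Opn leO F le res G le' res' \<alpha> \<longleftrightarrow>
     (\<forall>u\<in>Opn. \<forall>x\<in>F u. \<alpha> u x \<in> G u) \<and>
     (\<forall>u\<in>Opn. \<forall>v\<in>Opn. leO v u \<longrightarrow> (\<forall>x\<in>F u. res' u v (\<alpha> u x) = \<alpha> v (res u v x))) \<and>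
     (\<forall>u\<in>Opn. frame_hom (F u) (le u) (G u) (le' u) (\<alpha> u)) \<and>
     (\<forall>u\<in>Opn. \<forall>v\<in>Opn. leO v u \<longrightarrow>
        (\<forall>y\<in>F v. \<alpha> u (ladj F le res v u y) = ladj G le' res' v u (\<alpha> v y)))"

definition coslice_obj ::
  "'o set \<Rightarrow> ('o \<Rightarrow> 'o \<Rightarrow> bool) \<Rightarrow> 'a set \<Rightarrow> ('a \<Rightarrow> 'a \<Rightarrow> bool) \<Rightarrow> ('o \<Rightarrow> 'a) \<Rightarrow> bool" where
  "coslice_obj Opn leO L leL f \<longleftrightarrow> frame_on L leL \<and> frame_hom Opn leO L leL f"

definition coslice_mor ::
  "'o set \<Rightarrow> ('o \<Rightarrow> 'o \<Rightarrow> bool)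
     \<Rightarrow> 'a set \<Rightarrow> ('a \<Rightarrow> 'a \<Rightarrow> bool) \<Rightarrow> ('o \<Rightarrow> 'a)
     \<Rightarrow> 'b set \<Rightarrow> ('b \<Rightarrow> 'b \<Rightarrow> bool) \<Rightarrow> ('o \<Rightarrow> 'b) \<Rightarrow> ('a \<Rightarrow> 'b) \<Rightarrow> bool" where
  "coslice_mor Opn leO L leL f M leM g h \<longleftrightarrow>
     frame_hom L leL M leM h \<and> (\<forall>u\<in>Opn. h (f u) = g u)"

definition phi_F :: "'a set \<Rightarrow> ('a \<Rightarrow> 'a \<Rightarrow> bool) \<Rightarrow> ('o \<Rightarrow> 'a) \<Rightarrow> 'o \<Rightarrow> 'a set" where
  "phi_F L leL f u = {x \<in> L. leL x (f u)}"

definition phi_le :: "('a \<Rightarrow> 'a \<Rightarrow> bool) \<Rightarrow> 'o \<Rightarrow> 'a \<Rightarrow> 'a \<Rightarrow> bool" where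
  "phi_le leL u = leL"

definition phi_res :: "'a set \<Rightarrow> ('a \<Rightarrow> 'a \<Rightarrow> bool) \<Rightarrow> ('o \<Rightarrow> 'a) \<Rightarrow> 'o \<Rightarrow> 'o \<Rightarrow> 'a \<Rightarrow> 'a" where
  "phi_res L leL f u v x = meet L leL x (f v)"

definition phi_mor :: "('a \<Rightarrow> 'b) \<Rightarrow> 'o \<Rightarrow> 'a \<Rightarrow> 'b" where
  "phi_mor h u = h"

definition psi_hom ::
  "'o set \<Rightarrow> ('o \<Rightarrow> 'o \<Rightarrow> bool) \<Rightarrow> ('o \<Rightarrow> 'a set) \<Rightarrow> ('o \<Rightarrow> 'a \<Rightarrow> 'a \<Rightarrow> bool)
     \<Rightarrow> ('o \<Rightarrow> 'o \<Rightarrow> 'a \<Rightarrow> 'a) \<Rightarrow> 'o \<Rightarrow> 'a" where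
  "psi_hom Opn leO F le res u = ladj F le res u (top_of Opn leO) (top_of (F u) (le u))"

end

theory Submission
  imports Defs
begin

text \<open>
  Since \<open>f\<close> turns a cover \<open>u = \<Squnion>U\<close> into a join and meets
  distribute over joins in \<open>L\<close>, every section over \<open>u\<close> is the join of its restrictions; this
  gives gluing and separation. The left adjoints of restriction are the inclusions
  \<open>\<down>f(v) \<subseteq> \<down>f(u)\<close>, and the right adjoints are built from Heyting implication.

  Conversely, \<open>\<psi>(u) = l\<^bsub>u,1\<^esub>(\<top>)\<close> is a frame homomorphism \<open>\<O>(X) \<rightarrow> F(1)\<close>: joins are preserved
  by separation, and \<open>\<psi>(u) \<sqinter> \<psi>(v) \<le> \<psi>(u \<sqinter> v)\<close> follows by gluing \<open>\<top>\<^sub>u\<close> with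
  \<open>l\<^bsub>u\<sqinter>v,v\<^esub>(\<top>)\<close> over \<open>u \<squnion> v\<close> and applying Frobenius reciprocity. Since \<open>\<Phi>(f)(1) = L\<close> and
  \<open>\<psi> = f\<close> for \<open>\<Phi>(f)\<close>, the unit is the identity of \<open>L\<close>; the counit is restriction
  \<open>\<down>\<psi>(u) \<rightarrow> F(u)\<close>, \<open>x \<mapsto> x|\<^sub>u\<close>, with inverse \<open>l\<^bsub>u,1\<^esub>\<close>, because restriction is surjective and
  \<open>x \<sqinter> \<psi>(u) = l\<^bsub>u,1\<^esub>(x|\<^sub>u)\<close>.
\<close>

lemma poset_on_refl: "poset_on A le \<Longrightarrow> x \<in> A \<Longrightarrow> le x x"
  unfolding poset_on_def by blast

lemma poset_on_antisym: "poset_on A le \<Longrightarrow> x \<in> A \<Longrightarrow> y \<in> A \<Longrightarrow> le x y \<Longrightarrow> le y x \<Longrightarrow> x = y"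
  unfolding poset_on_def by blast

lemma poset_on_trans:
  "poset_on A le \<Longrightarrow> x \<in> A \<Longrightarrow> y \<in> A \<Longrightarrow> z \<in> A \<Longrightarrow> le x y \<Longrightarrow> le y z \<Longrightarrow> le x z"
  unfolding poset_on_def by blast

lemma lub_unique: "poset_on A le \<Longrightarrow> is_lub A le S x \<Longrightarrow> lub A le S = x"
  unfolding lub_def is_lub_def by (rule the_equality) (blast intro: poset_on_antisym)+

lemma glb_unique: "poset_on A le \<Longrightarrow> is_glb A le S x \<Longrightarrow> glb A le S = x"
  unfolding glb_def is_glb_def by (rule the_equality) (blast intro: poset_on_antisym)+

lemma lub_eqI:
  "poset_on A le \<Longrightarrow> t \<in> A \<Longrightarrow> (\<And>s. s \<in> S \<Longrightarrow> le s t) \<Longrightarrow>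
    (\<And>y. y \<in> A \<Longrightarrow> (\<And>s. s \<in> S \<Longrightarrow> le s y) \<Longrightarrow> le t y) \<Longrightarrow> lub A le S = t"
  by (rule lub_unique) (simp_all add: is_lub_def)

lemma top_eqI: "poset_on A le \<Longrightarrow> t \<in> A \<Longrightarrow> (\<And>x. x \<in> A \<Longrightarrow> le x t) \<Longrightarrow> top_of A le = t"
  unfolding top_of_def by (rule lub_eqI) simp_all

lemma meet_eqI:
  "poset_on A le \<Longrightarrow> z \<in> A \<Longrightarrow> le z x \<Longrightarrow> le z y \<Longrightarrow>
    (\<And>w. w \<in> A \<Longrightarrow> le w x \<Longrightarrow> le w y \<Longrightarrow> le w z) \<Longrightarrow> meet A le x y = z"
  unfolding meet_def by (rule glb_unique) (simp_all add: is_glb_def)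

lemma meet_commute: "meet A le x y = meet A le y x"
  unfolding meet_def by (simp add: insert_commute)

lemma complete_lattice_on_poset: "complete_lattice_on A le \<Longrightarrow> poset_on A le"
  unfolding complete_lattice_on_def by blast

lemma is_lub_lub: "complete_lattice_on A le \<Longrightarrow> S \<subseteq> A \<Longrightarrow> is_lub A le S (lub A le S)"
  unfolding complete_lattice_on_def by (metis lub_unique)

lemma lub_closed: "complete_lattice_on A le \<Longrightarrow> S \<subseteq> A \<Longrightarrow> lub A le S \<in> A"
  using is_lub_lub unfolding is_lub_def by blast

lemma lub_upper: "complete_lattice_on A le \<Longrightarrow> S \<subseteq> A \<Longrightarrow> s \<in> S \<Longrightarrow> le s (lub A le S)"
  using is_lub_lub unfolding is_lub_def by blast

lemma lub_least:
  "complete_lattice_on A le \<Longrightarrow> S \<subseteq> A \<Longrightarrow> y \<in> A \<Longrightarrow> (\<And>s. s \<in> S \<Longrightarrow> le s y) \<Longrightarrow> le (lub A le S) y"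
  using is_lub_lub unfolding is_lub_def by blast

lemma lub_image_mono:
  assumes c: "complete_lattice_on A le" and a: "a ` I \<subseteq> A" and b: "b ` I \<subseteq> A"
    and ab: "\<And>i. i \<in> I \<Longrightarrow> le (a i) (b i)"
  shows "le (lub A le (a ` I)) (lub A le (b ` I))"
proof (rule lub_least[OF c a lub_closed[OF c b]])
  fix s assume "s \<in> a ` I"
  then obtain i where i: "i \<in> I" and s: "s = a i" by blast
  have "le (b i) (lub A le (b ` I))" using lub_upper[OF c b] i by blast
  then show "le s (lub A le (b ` I))"
    using poset_on_trans[OF complete_lattice_on_poset[OF c]] ab[OF i] a b i lub_closed[OF c b]
    unfolding s by blast
qed

lemma is_glb_glb:
  assumes c: "complete_lattice_on A le" and S: "S \<subseteq> A"
  shows "is_glb A le S (glb A le S)"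
proof -
  let ?B = "{y\<in>A. \<forall>s\<in>S. le y s}"
  have "is_glb A le S (lub A le ?B)"
    using is_lub_lub[OF c, of ?B] S unfolding is_glb_def is_lub_def by blast
  then show ?thesis using glb_unique[OF complete_lattice_on_poset[OF c]] by simp
qed

context
  fixes A :: "'a set" and le
  assumes c: "complete_lattice_on A le"
begin

private lemma poset: "poset_on A le" using complete_lattice_on_poset[OF c] .

lemma meet_closed: "x \<in> A \<Longrightarrow> y \<in> A \<Longrightarrow> meet A le x y \<in> A"
  and meet_lower1: "x \<in> A \<Longrightarrow> y \<in> A \<Longrightarrow> le (meet A le x y) x"
  and meet_lower2: "x \<in> A \<Longrightarrow> y \<in> A \<Longrightarrow> le (meet A le x y) y"
  and meet_greatest: "x \<in> A \<Longrightarrow> y \<in> A \<Longrightarrow> z \<in> A \<Longrightarrow> le z x \<Longrightarrow> le z y \<Longrightarrow> le z (meet A le x y)"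
  using is_glb_glb[OF c, of "{x, y}"] unfolding meet_def is_glb_def by auto

lemma le_meet_iff:
  assumes x: "x \<in> A" and y: "y \<in> A" and z: "z \<in> A"
  shows "le z (meet A le x y) \<longleftrightarrow> le z x \<and> le z y"
proof
  assume "le z (meet A le x y)"
  then show "le z x \<and> le z y"
    using poset_on_trans[OF poset z meet_closed[OF x y]] meet_lower1[OF x y] meet_lower2[OF x y] x y
    by blast
qed (simp add: meet_greatest x y z)

lemma meet_absorb1: "x \<in> A \<Longrightarrow> y \<in> A \<Longrightarrow> le x y \<Longrightarrow> meet A le x y = x"
  by (rule meet_eqI[OF poset]) (simp_all add: poset_on_refl[OF poset])

lemma meet_absorb2: "x \<in> A \<Longrightarrow> y \<in> A \<Longrightarrow> le y x \<Longrightarrow> meet A le x y = y"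
  using meet_absorb1 meet_commute by metis

lemma le_iff_meet: "x \<in> A \<Longrightarrow> y \<in> A \<Longrightarrow> le x y \<longleftrightarrow> meet A le x y = x"
  using meet_absorb1 meet_lower2 by metis

lemma meet_idem: "x \<in> A \<Longrightarrow> meet A le x x = x"
  by (simp add: meet_absorb1 poset_on_refl[OF poset])

lemma meet_assoc:
  assumes x: "x \<in> A" and y: "y \<in> A" and z: "z \<in> A"
  shows "meet A le (meet A le x y) z = meet A le x (meet A le y z)" (is "?l = ?r")
proof -
  have l: "?l \<in> A" and r: "?r \<in> A" using x y z by (simp_all add: meet_closed)
  have iff: "le w ?l \<longleftrightarrow> le w ?r" if "w \<in> A" for w
    using that x y z by (simp add: le_meet_iff meet_closed)
  show ?thesis
    using poset_on_antisym[OF poset l r] iff[OF l] iff[OF r]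
      poset_on_refl[OF poset l] poset_on_refl[OF poset r]
    by blast
qed

lemma meet_mono: "x \<in> A \<Longrightarrow> y \<in> A \<Longrightarrow> z \<in> A \<Longrightarrow> le x y \<Longrightarrow> le (meet A le x z) (meet A le y z)"
  using poset_on_trans[OF poset meet_closed _ _ meet_lower1] meet_lower2 meet_closed
  by (simp add: le_meet_iff)

lemma top_closed: "top_of A le \<in> A"
  and le_top: "x \<in> A \<Longrightarrow> le x (top_of A le)"
  using is_lub_lub[OF c, of A] unfolding top_of_def is_lub_def by blast+

lemma meet_top: "x \<in> A \<Longrightarrow> meet A le x (top_of A le) = x"
  by (simp add: meet_absorb1 top_closed le_top)

end

lemma frame_on_complete_lattice: "frame_on A le \<Longrightarrow> complete_lattice_on A le"
  unfolding frame_on_def by blast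

lemma frame_on_distrib:
  "frame_on A le \<Longrightarrow> x \<in> A \<Longrightarrow> S \<subseteq> A \<Longrightarrow>
    meet A le x (lub A le S) = lub A le ((\<lambda>s. meet A le x s) ` S)"
  unfolding frame_on_def by blast

context
  fixes A :: "'a set" and le and a
  assumes c: "complete_lattice_on A le" and a: "a \<in> A"
begin

lemma poset_on_downset: "poset_on {x\<in>A. le x a} le"
  using complete_lattice_on_poset[OF c] unfolding poset_on_def by blast

lemma lub_downset: "S \<subseteq> {x\<in>A. le x a} \<Longrightarrow> lub {x\<in>A. le x a} le S = lub A le S"
  by (rule lub_eqI[OF poset_on_downset])
    (auto intro: lub_closed[OF c] lub_upper[OF c] lub_least[OF c] a)

lemma meet_downset:
  assumes "x \<in> {x\<in>A. le x a}" and "y \<in> {x\<in>A. le x a}"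
  shows "meet {x\<in>A. le x a} le x y = meet A le x y"
  using assms poset_on_trans[OF complete_lattice_on_poset[OF c] meet_closed[OF c] _ a meet_lower1[OF c]]
  by (intro meet_eqI[OF poset_on_downset]) (auto simp: meet_closed[OF c] meet_lower1[OF c]
      meet_lower2[OF c] meet_greatest[OF c])

lemma top_downset: "top_of {x\<in>A. le x a} le = a"
  by (rule top_eqI[OF poset_on_downset]) (auto simp: a poset_on_refl[OF complete_lattice_on_poset[OF c] a])

lemma complete_lattice_on_downset: "complete_lattice_on {x\<in>A. le x a} le"
  unfolding complete_lattice_on_def
proof (intro conjI allI impI poset_on_downset)
  fix S assume S: "S \<subseteq> {x\<in>A. le x a}"
  then have "is_lub {x\<in>A. le x a} le S (lub A le S)"
    using is_lub_lub[OF c, of S] lub_least[OF c, of S a] a unfolding is_lub_def by auto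
  then show "\<exists>x. is_lub {x\<in>A. le x a} le S x" by blast
qed

end

lemma frame_on_downset:
  assumes f: "frame_on A le" and a: "a \<in> A"
  shows "frame_on {x\<in>A. le x a} le"
  unfolding frame_on_def
proof (intro conjI ballI allI impI)
  have c: "complete_lattice_on A le" using frame_on_complete_lattice[OF f] .
  show "complete_lattice_on {x\<in>A. le x a} le" by (rule complete_lattice_on_downset[OF c a])
  fix x S assume x: "x \<in> {x\<in>A. le x a}" and S: "S \<subseteq> {x\<in>A. le x a}"
  have xS: "(\<lambda>s. meet A le x s) ` S \<subseteq> {x\<in>A. le x a}"
    using x S poset_on_trans[OF complete_lattice_on_poset[OF c] meet_closed[OF c] _ a
        meet_lower1[OF c]] meet_closed[OF c] by auto
  have "meet {x\<in>A. le x a} le x (lub {x\<in>A. le x a} le S) = meet A le x (lub A le S)"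
    using meet_downset[OF c a x] lub_closed[OF complete_lattice_on_downset[OF c a] S]
    by (simp add: lub_downset[OF c a S])
  also have "\<dots> = lub A le ((\<lambda>s. meet A le x s) ` S)"
    using frame_on_distrib[OF f _ ] x S by blast
  also have "\<dots> = lub {x\<in>A. le x a} le ((\<lambda>s. meet {x\<in>A. le x a} le x s) ` S)"
    using lub_downset[OF c a xS] meet_downset[OF c a x] S by (simp add: subset_iff)
  finally show "meet {x\<in>A. le x a} le x (lub {x\<in>A. le x a} le S) =
      lub {x\<in>A. le x a} le ((\<lambda>s. meet {x\<in>A. le x a} le x s) ` S)" .
qed

definition heyting_imp :: "'a set \<Rightarrow> ('a \<Rightarrow> 'a \<Rightarrow> bool) \<Rightarrow> 'a \<Rightarrow> 'a \<Rightarrow> 'a" where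
  "heyting_imp A le a b = lub A le {c\<in>A. le (meet A le c a) b}"

lemma heyting_imp_closed: "complete_lattice_on A le \<Longrightarrow> heyting_imp A le a b \<in> A"
  unfolding heyting_imp_def by (rule lub_closed) auto

lemma le_heyting_imp_iff:
  assumes f: "frame_on A le" and a: "a \<in> A" and b: "b \<in> A" and x: "x \<in> A"
  shows "le x (heyting_imp A le a b) \<longleftrightarrow> le (meet A le x a) b"
proof
  have c: "complete_lattice_on A le" using frame_on_complete_lattice[OF f] .
  let ?C = "{c\<in>A. le (meet A le c a) b}"
  have C: "?C \<subseteq> A" and aC: "(\<lambda>c. meet A le a c) ` ?C \<subseteq> A"
    using meet_closed[OF c a] by auto
  assume "le x (heyting_imp A le a b)"
  then have "le (meet A le x a) (meet A le a (heyting_imp A le a b))"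
    using meet_mono[OF c x heyting_imp_closed[OF c] a] by (simp only: meet_commute[of A le _ a])
  also have "meet A le a (heyting_imp A le a b) = lub A le ((\<lambda>c. meet A le a c) ` ?C)"
    unfolding heyting_imp_def using frame_on_distrib[OF f a C] .
  finally have le_lub: "le (meet A le x a) (lub A le ((\<lambda>c. meet A le a c) ` ?C))" .
  have lub_le: "le (lub A le ((\<lambda>c. meet A le a c) ` ?C)) b"
  proof (rule lub_least[OF c aC b])
    fix s assume "s \<in> (\<lambda>c. meet A le a c) ` ?C"
    then obtain d where "d \<in> ?C" and "s = meet A le a d" by blast
    then show "le s b" by (simp add: meet_commute[of A le a d])
  qed
  show "le (meet A le x a) b"
    using poset_on_trans[OF complete_lattice_on_poset[OF c] meet_closed[OF c x a]
        lub_closed[OF c aC] b le_lub lub_le] .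
next
  assume "le (meet A le x a) b"
  then show "le x (heyting_imp A le a b)"
    unfolding heyting_imp_def using x by (intro lub_upper[OF frame_on_complete_lattice[OF f]]) auto
qed

lemma frame_hom_mono:
  assumes cA: "complete_lattice_on A le" and cB: "complete_lattice_on B le'"
    and h: "frame_hom A le B le' h" and x: "x \<in> A" and y: "y \<in> A" and xy: "le x y"
  shows "le' (h x) (h y)"
proof -
  have "h x = meet B le' (h x) (h y)"
    using h x y meet_absorb1[OF cA x y xy] unfolding frame_hom_def by metis
  then show ?thesis using h x y le_iff_meet[OF cB] unfolding frame_hom_def by metis
qed

lemma frame_hom_downset:
  assumes cA: "complete_lattice_on A le" and cB: "complete_lattice_on B le'"
    and h: "frame_hom A le B le' h" and a: "a \<in> A"
  shows "frame_hom {x\<in>A. le x a} le {y\<in>B. le' y (h a)} le' h"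
proof -
  have h_closed: "\<And>x. x \<in> A \<Longrightarrow> h x \<in> B"
    and h_meet: "\<And>x y. x \<in> A \<Longrightarrow> y \<in> A \<Longrightarrow> h (meet A le x y) = meet B le' (h x) (h y)"
    and h_lub: "\<And>S. S \<subseteq> A \<Longrightarrow> h (lub A le S) = lub B le' (h ` S)"
    using h unfolding frame_hom_def by blast+
  have maps: "h x \<in> {y\<in>B. le' y (h a)}" if "x \<in> {x\<in>A. le x a}" for x
    using that h_closed frame_hom_mono[OF cA cB h _ a] by blast
  show ?thesis
    unfolding frame_hom_def
  proof (intro conjI ballI allI impI maps)
    show "h (top_of {x\<in>A. le x a} le) = top_of {y\<in>B. le' y (h a)} le'"
      by (simp add: top_downset[OF cA a] top_downset[OF cB h_closed[OF a]])
    show "h (meet {x\<in>A. le x a} le x y) = meet {y\<in>B. le' y (h a)} le' (h x) (h y)"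
      if "x \<in> {x\<in>A. le x a}" and "y \<in> {x\<in>A. le x a}" for x y
      using that maps h_meet meet_downset[OF cA a] meet_downset[OF cB h_closed[OF a]] by simp
    show "h (lub {x\<in>A. le x a} le S) = lub {y\<in>B. le' y (h a)} le' (h ` S)"
      if S: "S \<subseteq> {x\<in>A. le x a}" for S
    proof -
      have "h ` S \<subseteq> {y\<in>B. le' y (h a)}" using S maps by blast
      moreover have "S \<subseteq> A" using S by blast
      ultimately show ?thesis
        using h_lub lub_downset[OF cA a S] lub_downset[OF cB h_closed[OF a]] by simp
    qed
  qed
qed

lemma ladj_eqI:
  assumes "poset_on (F u) (le u)" and "x \<in> F u" and "le v y (res u v x)"
    and "\<And>z. z \<in> F u \<Longrightarrow> le v y (res u v z) \<Longrightarrow> le u x z"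
  shows "ladj F le res v u y = x"
  unfolding ladj_def using assms by (intro the_equality) (blast intro: poset_on_antisym)+

lemma frame_hom_id: "frame_hom A le A le (\<lambda>x. x)"
  unfolding frame_hom_def by simp

locale frame_under =
  fixes Opn :: "'o set" and leO and L :: "'a set" and leL and f
  assumes opens_frame: "frame_on Opn leO" and coslice: "coslice_obj Opn leO L leL f"
begin

lemma frame_L: "frame_on L leL"
  and hom_f: "frame_hom Opn leO L leL f"
  using coslice unfolding coslice_obj_def by blast+

lemma complete_opens: "complete_lattice_on Opn leO"
  using frame_on_complete_lattice[OF opens_frame] .

lemma complete_L: "complete_lattice_on L leL"
  using frame_on_complete_lattice[OF frame_L] .

lemma poset_L: "poset_on L leL"
  using complete_lattice_on_poset[OF complete_L] .

lemma f_closed: "u \<in> Opn \<Longrightarrow> f u \<in> L"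
  and f_meet: "u \<in> Opn \<Longrightarrow> v \<in> Opn \<Longrightarrow> f (meet Opn leO u v) = meet L leL (f u) (f v)"
  and f_lub: "U \<subseteq> Opn \<Longrightarrow> f (lub Opn leO U) = lub L leL (f ` U)"
  and f_top: "f (top_of Opn leO) = top_of L leL"
  using hom_f unfolding frame_hom_def by blast+

lemma f_mono: "u \<in> Opn \<Longrightarrow> v \<in> Opn \<Longrightarrow> leO v u \<Longrightarrow> leL (f v) (f u)"
  using frame_hom_mono[OF complete_opens complete_L hom_f] .

abbreviation "P \<equiv> phi_F L leL f"
abbreviation "R \<equiv> phi_res L leL f"

lemma mem_phi_F: "x \<in> P u \<longleftrightarrow> x \<in> L \<and> leL x (f u)"
  by (simp add: phi_F_def)

lemma phi_F_mono: "u \<in> Opn \<Longrightarrow> v \<in> Opn \<Longrightarrow> leO v u \<Longrightarrow> P v \<subseteq> P u"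
  using poset_on_trans[OF poset_L _ f_closed f_closed _ f_mono] by (auto simp: mem_phi_F)

lemma phi_res_closed: "v \<in> Opn \<Longrightarrow> x \<in> P u \<Longrightarrow> R u v x \<in> P v"
  by (simp add: mem_phi_F phi_res_def meet_closed[OF complete_L] meet_lower2[OF complete_L] f_closed)

lemma phi_res_fixes: "v \<in> Opn \<Longrightarrow> y \<in> P v \<Longrightarrow> R u v y = y"
  by (simp add: mem_phi_F phi_res_def meet_absorb1[OF complete_L] f_closed)

lemma le_phi_res_iff: "v \<in> Opn \<Longrightarrow> x \<in> P u \<Longrightarrow> y \<in> P v \<Longrightarrow> leL y (R u v x) \<longleftrightarrow> leL y x"
  by (auto simp: mem_phi_F phi_res_def le_meet_iff[OF complete_L] f_closed)

lemma ladj_phi: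
  assumes u: "u \<in> Opn" and v: "v \<in> Opn" and vu: "leO v u" and y: "y \<in> P v"
  shows "ladj P (phi_le leL) R v u y = y"
proof (rule ladj_eqI)
  show "poset_on (P u) (phi_le leL u)"
    unfolding phi_F_def phi_le_def by (rule poset_on_downset[OF complete_L f_closed[OF u]])
  show "y \<in> P u" using phi_F_mono[OF u v vu] y by blast
  then show "phi_le leL v y (R u v y)"
    using phi_res_fixes[OF v y] y poset_on_refl[OF poset_L] by (simp add: phi_le_def mem_phi_F)
  show "\<And>z. z \<in> P u \<Longrightarrow> phi_le leL v y (R u v z) \<Longrightarrow> phi_le leL u y z"
    using le_phi_res_iff[OF v _ y] by (simp add: phi_le_def)
qed

lemma presheaf_phi: "presheaf_on Opn leO P R"
  unfolding presheaf_on_def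
proof (intro conjI ballI impI)
  show "\<And>u v x. u \<in> Opn \<Longrightarrow> v \<in> Opn \<Longrightarrow> leO v u \<Longrightarrow> x \<in> P u \<Longrightarrow> R u v x \<in> P v"
    using phi_res_closed by blast
  show "\<And>u x. u \<in> Opn \<Longrightarrow> x \<in> P u \<Longrightarrow> R u u x = x"
    using phi_res_fixes by blast
  fix u v w x assume u: "u \<in> Opn" and v: "v \<in> Opn" and w: "w \<in> Opn" and wvu: "leO w v \<and> leO v u"
    and x: "x \<in> P u"
  have "meet L leL (f v) (f w) = f w"
    using meet_absorb2[OF complete_L f_closed[OF v] f_closed[OF w] f_mono[OF v w]] wvu by blast
  then show "R v w (R u v x) = R u w x"
    using meet_assoc[OF complete_L _ f_closed[OF v] f_closed[OF w]] x
    by (simp add: phi_res_def mem_phi_F)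
qed

lemma phi_cover_join:
  assumes U: "U \<subseteq> Opn" and u: "lub Opn leO U = u" and x: "x \<in> P u"
  shows "x = lub L leL ((\<lambda>w. R u w x) ` U)"
proof -
  have xL: "x \<in> L" and fU: "f ` U \<subseteq> L" using x U f_closed by (auto simp: mem_phi_F)
  have "x = meet L leL x (f u)"
    using x f_closed lub_closed[OF complete_opens U] u
    by (simp add: mem_phi_F meet_absorb1[OF complete_L])
  also have "\<dots> = lub L leL ((\<lambda>z. meet L leL x z) ` f ` U)"
    using frame_on_distrib[OF frame_L xL fU] f_lub[OF U] u by simp
  finally show ?thesis by (simp add: image_image phi_res_def)
qed

lemma phi_separated:
  assumes U: "U \<subseteq> Opn" and u: "lub Opn leO U = u" and s: "s \<in> P u" and t: "t \<in> P u"
    and st: "\<forall>w\<in>U. leL (R u w s) (R u w t)"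
  shows "leL s t"
proof -
  have restrictions: "(\<lambda>w. R u w x) ` U \<subseteq> L" if "x \<in> P u" for x
    using phi_res_closed U that by (auto simp: mem_phi_F)
  have "leL (lub L leL ((\<lambda>w. R u w s) ` U)) (lub L leL ((\<lambda>w. R u w t) ` U))"
    using lub_image_mono[OF complete_L restrictions[OF s] restrictions[OF t]] st by blast
  then show ?thesis
    using phi_cover_join[OF U u s, symmetric] phi_cover_join[OF U u t, symmetric] by simp
qed

lemma phi_compatible_meet:
  assumes w: "w \<in> Opn" and w': "w' \<in> Opn" and a: "a \<in> P w" and b: "b \<in> P w'"
    and compatible: "R w (meet Opn leO w w') a = R w' (meet Opn leO w w') b"
  shows "meet L leL (f w) b = meet L leL a (f (meet Opn leO w w'))"
proof -
  have bL: "b \<in> L" and b_le: "leL b (f w')" using b by (simp_all add: mem_phi_F)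
  note cL = complete_L and fw = f_closed[OF w] and fw' = f_closed[OF w']
  have "meet L leL (f w) b = meet L leL (meet L leL b (f w')) (f w)"
    by (simp only: meet_absorb1[OF cL bL fw' b_le] meet_commute[of L leL "f w"])
  also have "\<dots> = R w' (meet Opn leO w w') b"
    by (simp only: meet_assoc[OF cL bL fw' fw] f_meet[OF w w'] meet_commute[of L leL "f w'"]
        phi_res_def)
  finally show ?thesis using compatible by (simp add: phi_res_def)
qed

lemma phi_res_glued:
  assumes U: "U \<subseteq> Opn" and s: "\<forall>w\<in>U. s w \<in> P w"
    and compatible: "\<forall>w\<in>U. \<forall>w'\<in>U.
      R w (meet Opn leO w w') (s w) = R w' (meet Opn leO w w') (s w')"
    and w: "w \<in> U"
  shows "R u w (lub L leL (s ` U)) = s w"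
proof -
  have sL: "s ` U \<subseteq> L" using s by (auto simp: mem_phi_F)
  have wO: "w \<in> Opn" and swL: "s w \<in> L" using w U sL by auto
  have "R u w (lub L leL (s ` U)) = lub L leL ((\<lambda>w'. meet L leL (f w) (s w')) ` U)"
    using frame_on_distrib[OF frame_L f_closed[OF wO] sL]
    by (simp add: phi_res_def meet_commute image_image)
  also have "\<dots> = s w"
  proof (rule lub_eqI[OF poset_L swL])
    fix t assume "t \<in> (\<lambda>w'. meet L leL (f w) (s w')) ` U"
    then obtain w' where w': "w' \<in> U" and "t = meet L leL (f w) (s w')" by blast
    then have "t = meet L leL (s w) (f (meet Opn leO w w'))"
      using phi_compatible_meet[OF wO _ _ _ bspec[OF bspec[OF compatible w] w']] w U s by auto
    moreover have "meet Opn leO w w' \<in> Opn" using meet_closed[OF complete_opens wO] w' U by blast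
    ultimately show "leL t (s w)" using meet_lower1[OF complete_L swL f_closed] by blast
  next
    have "meet L leL (f w) (s w) = s w"
      using s w by (simp add: mem_phi_F meet_absorb2[OF complete_L] f_closed[OF wO])
    moreover fix y assume "\<And>t. t \<in> (\<lambda>w'. meet L leL (f w) (s w')) ` U \<Longrightarrow> leL t y"
    ultimately show "leL (s w) y" using w by (metis image_eqI)
  qed
  finally show ?thesis .
qed

lemma phi_glue:
  assumes U: "U \<subseteq> Opn" and u: "lub Opn leO U = u" and s: "\<forall>w\<in>U. s w \<in> P w"
    and compatible: "\<forall>w\<in>U. \<forall>w'\<in>U.
      R w (meet Opn leO w w') (s w) = R w' (meet Opn leO w w') (s w')"
  shows "\<exists>!x. x \<in> P u \<and> (\<forall>w\<in>U. R u w x = s w)"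
proof
  have sL: "s ` U \<subseteq> L" using s by (auto simp: mem_phi_F)
  have uO: "u \<in> Opn" using lub_closed[OF complete_opens U] u by simp
  have "s w \<in> P u" if w: "w \<in> U" for w
  proof -
    have "leO w u" using lub_upper[OF complete_opens U w] u by simp
    then show ?thesis using phi_F_mono[OF uO] U s w by blast
  qed
  then have "leL (lub L leL (s ` U)) (f u)"
    by (intro lub_least[OF complete_L sL f_closed[OF uO]]) (auto simp: mem_phi_F)
  then show "lub L leL (s ` U) \<in> P u \<and> (\<forall>w\<in>U. R u w (lub L leL (s ` U)) = s w)"
    using lub_closed[OF complete_L sL] phi_res_glued[OF U s compatible] by (simp add: mem_phi_F)
  fix y assume y: "y \<in> P u \<and> (\<forall>w\<in>U. R u w y = s w)"
  then have "y = lub L leL ((\<lambda>w. R u w y) ` U)" using phi_cover_join[OF U u] by blast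
  also have "(\<lambda>w. R u w y) ` U = s ` U" using y by simp
  finally show "y = lub L leL (s ` U)" .
qed

lemma sheaf_phi: "sheaf_on Opn leO P R"
  unfolding sheaf_on_def
  by (intro conjI presheaf_phi ballI allI impI; elim conjE) (rule phi_glue)

lemma posheaf_phi: "posheaf_on Opn leO P (phi_le leL) R"
  unfolding posheaf_on_def phi_le_def
proof (intro conjI ballI impI allI sheaf_phi)
  show "\<And>u. u \<in> Opn \<Longrightarrow> poset_on (P u) leL"
    unfolding phi_F_def by (rule poset_on_downset[OF complete_L f_closed])
  show "\<And>u v x y. v \<in> Opn \<Longrightarrow> x \<in> P u \<Longrightarrow> y \<in> P u \<Longrightarrow> leL x y \<Longrightarrow> leL (R u v x) (R u v y)"
    by (simp add: mem_phi_F phi_res_def meet_mono[OF complete_L] f_closed)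
qed (rule phi_separated)

lemma right_adjoint_phi:
  assumes u: "u \<in> Opn" and v: "v \<in> Opn"
  shows "is_right_adjoint P (phi_le leL) R v u (\<lambda>y. meet L leL (f u) (heyting_imp L leL (f v) y))"
  unfolding is_right_adjoint_def phi_le_def
proof (intro conjI ballI)
  show "\<And>y. meet L leL (f u) (heyting_imp L leL (f v) y) \<in> P u"
    by (simp add: mem_phi_F meet_closed[OF complete_L] meet_lower1[OF complete_L] f_closed[OF u]
        heyting_imp_closed[OF complete_L])
  fix x y assume "x \<in> P u" and "y \<in> P v"
  then show "leL (R u v x) y \<longleftrightarrow> leL x (meet L leL (f u) (heyting_imp L leL (f v) y))"
    using f_closed[OF u] f_closed[OF v]
    by (simp add: mem_phi_F phi_res_def le_meet_iff[OF complete_L] heyting_imp_closed[OF complete_L]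
        le_heyting_imp_iff[OF frame_L])
qed

lemma frobenius_phi:
  assumes u: "u \<in> Opn" and v: "v \<in> Opn" and vu: "leO v u" and x: "x \<in> P u" and y: "y \<in> P v"
  shows "meet (P u) (phi_le leL u) x (ladj P (phi_le leL) R v u y) =
    ladj P (phi_le leL) R v u (meet (P v) (phi_le leL v) (R u v x) y)"
proof -
  have xL: "x \<in> L" and yL: "y \<in> L" and fv: "f v \<in> L" and yfv: "leL y (f v)"
    using x y f_closed[OF v] by (simp_all add: mem_phi_F)
  have xy: "meet L leL x y \<in> P v"
    using meet_closed[OF complete_L xL yL] poset_on_trans[OF poset_L _ yL fv _ yfv]
      meet_lower2[OF complete_L xL yL] by (simp add: mem_phi_F)
  text \<open>The left adjoints are inclusions, and \<open>(x \<sqinter> f v) \<sqinter> y = x \<sqinter> y\<close> because \<open>y \<le> f v\<close>.\<close>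
  have "meet L leL (R u v x) y = meet L leL x y"
    by (simp only: phi_res_def meet_assoc[OF complete_L xL fv yL] meet_commute[of L leL "f v"]
        meet_absorb1[OF complete_L yL fv yfv])
  then show ?thesis
    using meet_downset[OF complete_L f_closed[OF u]] meet_downset[OF complete_L f_closed[OF v]]
      x y phi_res_closed[OF v x] phi_F_mono[OF u v vu] xy
    by (simp add: phi_le_def phi_F_def ladj_phi[OF u v vu] subset_iff)
qed

lemma frame_sheaf_phi: "frame_sheaf_on Opn leO P (phi_le leL) R"
  unfolding frame_sheaf_on_def
proof (intro conjI ballI impI posheaf_phi frobenius_phi)
  show "\<And>u. u \<in> Opn \<Longrightarrow> frame_on (P u) (phi_le leL u)"
    unfolding phi_F_def phi_le_def by (rule frame_on_downset[OF frame_L f_closed])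
  fix u v assume u: "u \<in> Opn" and v: "v \<in> Opn" and vu: "leO v u"
  show "R u v ` P u = P v"
  proof
    show "R u v ` P u \<subseteq> P v" using phi_res_closed[OF v] by blast
    show "P v \<subseteq> R u v ` P u"
    proof
      fix y assume y: "y \<in> P v"
      then show "y \<in> R u v ` P u"
        using phi_F_mono[OF u v vu] phi_res_fixes[OF v y] by (intro image_eqI) auto
    qed
  qed
  show "\<exists>l. is_left_adjoint P (phi_le leL) R v u l"
    unfolding is_left_adjoint_def phi_le_def
    using phi_F_mono[OF u v vu] le_phi_res_iff[OF v] by (intro exI[of _ "\<lambda>y. y"]) blast
  show "\<exists>r. is_right_adjoint P (phi_le leL) R v u r" using right_adjoint_phi[OF u v] by blast
qed

abbreviation "T \<equiv> top_of Opn leO"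

lemma phi_F_top: "P T = L"
  using le_top[OF complete_L] by (auto simp: mem_phi_F f_top)

lemma top_phi_F: "u \<in> Opn \<Longrightarrow> top_of (P u) (phi_le leL u) = f u"
  unfolding phi_F_def phi_le_def by (rule top_downset[OF complete_L f_closed])

lemma psi_hom_phi: "u \<in> Opn \<Longrightarrow> psi_hom Opn leO P (phi_le leL) R u = f u"
  unfolding psi_hom_def
  using ladj_phi[OF top_closed[OF complete_opens] _ le_top[OF complete_opens]]
    f_closed poset_on_refl[OF poset_L] by (simp add: top_phi_F mem_phi_F)

lemma unit_coslice_mor:
  "coslice_mor Opn leO L leL f (P T) (phi_le leL T) (psi_hom Opn leO P (phi_le leL) R) (\<lambda>x. x)"
  and unit_inverse_coslice_mor:
  "coslice_mor Opn leO (P T) (phi_le leL T) (psi_hom Opn leO P (phi_le leL) R) L leL f (\<lambda>x. x)"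
  unfolding coslice_mor_def phi_F_top by (simp_all add: frame_hom_id psi_hom_phi phi_le_def)

end

lemma frame_morphism_phi_mor:
  assumes "frame_under Opn leO L leL f" and "frame_under Opn leO M leM g"
    and "coslice_mor Opn leO L leL f M leM g h"
  shows "frame_morphism Opn leO (phi_F L leL f) (phi_le leL) (phi_res L leL f)
    (phi_F M leM g) (phi_le leM) (phi_res M leM g) (phi_mor h)"
proof -
  interpret A: frame_under Opn leO L leL f by fact
  interpret B: frame_under Opn leO M leM g by fact
  have h: "frame_hom L leL M leM h" and hf: "\<And>u. u \<in> Opn \<Longrightarrow> h (f u) = g u"
    using assms(3) unfolding coslice_mor_def by blast+
  have stage: "frame_hom (A.P u) leL (B.P u) leM h" if u: "u \<in> Opn" for u
    using frame_hom_downset[OF A.complete_L B.complete_L h A.f_closed[OF u]] hf[OF u]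
    by (simp add: phi_F_def)
  have h_meet: "\<And>x y. x \<in> L \<Longrightarrow> y \<in> L \<Longrightarrow> h (meet L leL x y) = meet M leM (h x) (h y)"
    using h unfolding frame_hom_def by blast
  show ?thesis
    unfolding frame_morphism_def phi_mor_def
  proof (intro conjI ballI impI)
    show "\<And>u x. u \<in> Opn \<Longrightarrow> x \<in> A.P u \<Longrightarrow> h x \<in> B.P u"
      using stage unfolding frame_hom_def by blast
    show "\<And>u. u \<in> Opn \<Longrightarrow> frame_hom (A.P u) (phi_le leL u) (B.P u) (phi_le leM u) h"
      using stage by (simp add: phi_le_def)
    show "\<And>u v x. v \<in> Opn \<Longrightarrow> x \<in> A.P u \<Longrightarrow> B.R u v (h x) = h (A.R u v x)"
      using h_meet A.f_closed hf by (simp add: phi_res_def A.mem_phi_F)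
    show "\<And>u v y. u \<in> Opn \<Longrightarrow> v \<in> Opn \<Longrightarrow> leO v u \<Longrightarrow> y \<in> A.P v \<Longrightarrow>
        h (ladj A.P (phi_le leL) A.R v u y) = ladj B.P (phi_le leM) B.R v u (h y)"
      using A.ladj_phi B.ladj_phi stage unfolding frame_hom_def by simp
  qed
qed

locale frame_sheaf =
  fixes Opn :: "'o set" and leO and F :: "'o \<Rightarrow> 'a set" and le and res
  assumes opens_frame: "frame_on Opn leO" and is_frame_sheaf: "frame_sheaf_on Opn leO F le res"
begin

abbreviation "T \<equiv> top_of Opn leO"
abbreviation "top_F u \<equiv> top_of (F u) (le u)"
abbreviation "lad \<equiv> ladj F le res"

lemma complete_opens: "complete_lattice_on Opn leO"
  using frame_on_complete_lattice[OF opens_frame] .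

lemma T_closed: "T \<in> Opn"
  and le_T: "u \<in> Opn \<Longrightarrow> leO u T"
  using top_closed[OF complete_opens] le_top[OF complete_opens] by blast+

lemma posheaf: "posheaf_on Opn leO F le res"
  and frame_F: "u \<in> Opn \<Longrightarrow> frame_on (F u) (le u)"
  using is_frame_sheaf unfolding frame_sheaf_on_def by blast+

lemmas restriction =
  is_frame_sheaf[unfolded frame_sheaf_on_def, THEN conjunct2, THEN conjunct2, rule_format]

lemma res_surj: "u \<in> Opn \<Longrightarrow> v \<in> Opn \<Longrightarrow> leO v u \<Longrightarrow> res u v ` F u = F v"
  by (rule restriction[THEN conjunct1])

lemma left_adjoint_exists:
  "u \<in> Opn \<Longrightarrow> v \<in> Opn \<Longrightarrow> leO v u \<Longrightarrow> \<exists>l. is_left_adjoint F le res v u l"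
  by (rule restriction[THEN conjunct2, THEN conjunct1])

lemma right_adjoint_exists:
  "u \<in> Opn \<Longrightarrow> v \<in> Opn \<Longrightarrow> leO v u \<Longrightarrow> \<exists>r. is_right_adjoint F le res v u r"
  by (rule restriction[THEN conjunct2, THEN conjunct2, THEN conjunct1])

lemma frobenius:
  "u \<in> Opn \<Longrightarrow> v \<in> Opn \<Longrightarrow> leO v u \<Longrightarrow> x \<in> F u \<Longrightarrow> y \<in> F v \<Longrightarrow>
    meet (F u) (le u) x (lad v u y) = lad v u (meet (F v) (le v) (res u v x) y)"
  using restriction[THEN conjunct2, THEN conjunct2, THEN conjunct2] by blast

lemma sheaf: "sheaf_on Opn leO F res"
  using posheaf unfolding posheaf_on_def by (rule conjunct1)

lemma presheaf: "presheaf_on Opn leO F res"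
  using sheaf unfolding sheaf_on_def by (rule conjunct1)

lemma complete_F: "u \<in> Opn \<Longrightarrow> complete_lattice_on (F u) (le u)"
  using frame_on_complete_lattice[OF frame_F] .

lemma poset_F: "u \<in> Opn \<Longrightarrow> poset_on (F u) (le u)"
  using complete_lattice_on_poset[OF complete_F] .

lemma res_closed: "u \<in> Opn \<Longrightarrow> v \<in> Opn \<Longrightarrow> leO v u \<Longrightarrow> x \<in> F u \<Longrightarrow> res u v x \<in> F v"
  and res_id: "u \<in> Opn \<Longrightarrow> x \<in> F u \<Longrightarrow> res u u x = x"
  and res_res: "u \<in> Opn \<Longrightarrow> v \<in> Opn \<Longrightarrow> w \<in> Opn \<Longrightarrow> leO w v \<Longrightarrow> leO v u \<Longrightarrow> x \<in> F u \<Longrightarrow>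
    res v w (res u v x) = res u w x"
  using presheaf unfolding presheaf_on_def by blast+

lemma res_mono: "u \<in> Opn \<Longrightarrow> v \<in> Opn \<Longrightarrow> leO v u \<Longrightarrow> x \<in> F u \<Longrightarrow> y \<in> F u \<Longrightarrow> le u x y \<Longrightarrow>
    le v (res u v x) (res u v y)"
  and separated: "u \<in> Opn \<Longrightarrow> U \<subseteq> Opn \<Longrightarrow> lub Opn leO U = u \<Longrightarrow> s \<in> F u \<Longrightarrow> t \<in> F u \<Longrightarrow>
    (\<And>w. w \<in> U \<Longrightarrow> le w (res u w s) (res u w t)) \<Longrightarrow> le u s t"
  using posheaf unfolding posheaf_on_def by blast+

lemma glue:
  assumes "u \<in> Opn" "U \<subseteq> Opn" "lub Opn leO U = u" "\<forall>w\<in>U. s w \<in> F w"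
    "\<forall>w\<in>U. \<forall>w'\<in>U. res w (meet Opn leO w w') (s w) = res w' (meet Opn leO w w') (s w')"
  shows "\<exists>x. x \<in> F u \<and> (\<forall>w\<in>U. res u w x = s w)"
  using sheaf[unfolded sheaf_on_def, THEN conjunct2, rule_format, of u U s] assms by blast

lemma ladj_unique:
  assumes u: "u \<in> Opn" and x: "x \<in> F u"
    and adj: "\<And>z. z \<in> F u \<Longrightarrow> le u x z \<longleftrightarrow> le v y (res u v z)"
  shows "lad v u y = x"
proof (rule ladj_eqI[where F = F and le = le and res = res, OF poset_F[OF u] x])
  show "le v y (res u v x)" using adj[OF x] poset_on_refl[OF poset_F[OF u] x] by simp
qed (use adj in blast)

lemma ladj_closed: "u \<in> Opn \<Longrightarrow> v \<in> Opn \<Longrightarrow> leO v u \<Longrightarrow> y \<in> F v \<Longrightarrow> lad v u y \<in> F u"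
  and ladj_le_iff: "u \<in> Opn \<Longrightarrow> v \<in> Opn \<Longrightarrow> leO v u \<Longrightarrow> y \<in> F v \<Longrightarrow> x \<in> F u \<Longrightarrow>
    le u (lad v u y) x \<longleftrightarrow> le v y (res u v x)"
proof -
  assume u: "u \<in> Opn" and v: "v \<in> Opn" and vu: "leO v u" and y: "y \<in> F v"
  obtain l where "is_left_adjoint F le res v u l" using left_adjoint_exists[OF u v vu] by blast
  then have l: "l y \<in> F u" and l_adj: "\<And>x. x \<in> F u \<Longrightarrow> le u (l y) x \<longleftrightarrow> le v y (res u v x)"
    using y unfolding is_left_adjoint_def by blast+
  have "lad v u y = l y" using ladj_unique[OF u l l_adj] .
  then show "lad v u y \<in> F u" and "x \<in> F u \<Longrightarrow> le u (lad v u y) x \<longleftrightarrow> le v y (res u v x)"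
    using l l_adj by simp_all
qed

text \<open>Restriction is surjective, so its left adjoint is a section of it.\<close>
lemma res_ladj:
  assumes u: "u \<in> Opn" and v: "v \<in> Opn" and vu: "leO v u" and y: "y \<in> F v"
  shows "res u v (lad v u y) = y"
proof (rule poset_on_antisym[OF poset_F[OF v] res_closed[OF u v vu ladj_closed[OF u v vu y]] y])
  obtain z where z: "z \<in> F u" and yz: "y = res u v z" using res_surj[OF u v vu] y by blast
  have "le u (lad v u y) z"
    using ladj_le_iff[OF u v vu y z] yz poset_on_refl[OF poset_F[OF v] y] by simp
  then show "le v (res u v (lad v u y)) y"
    using res_mono[OF u v vu ladj_closed[OF u v vu y] z] yz by simp
  show "le v y (res u v (lad v u y))"
    using ladj_le_iff[OF u v vu y ladj_closed[OF u v vu y]]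
      poset_on_refl[OF poset_F[OF u] ladj_closed[OF u v vu y]] by simp
qed

lemma ladj_mono:
  assumes u: "u \<in> Opn" and v: "v \<in> Opn" and vu: "leO v u"
    and y: "y \<in> F v" and y': "y' \<in> F v" and yy': "le v y y'"
  shows "le u (lad v u y) (lad v u y')"
  using ladj_le_iff[OF u v vu y ladj_closed[OF u v vu y']] res_ladj[OF u v vu y'] yy' by simp

lemma ladj_ladj:
  assumes u: "u \<in> Opn" and v: "v \<in> Opn" and w: "w \<in> Opn" and wv: "leO w v" and vu: "leO v u"
    and y: "y \<in> F w"
  shows "lad v u (lad w v y) = lad w u y"
proof -
  have y': "lad w v y \<in> F v" using ladj_closed[OF v w wv y] .
  show ?thesis
  proof (rule ladj_unique[OF u ladj_closed[OF u v vu y'], symmetric])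
    fix z assume z: "z \<in> F u"
    have "le u (lad v u (lad w v y)) z \<longleftrightarrow> le w y (res v w (res u v z))"
      using ladj_le_iff[OF u v vu y' z] ladj_le_iff[OF v w wv y res_closed[OF u v vu z]] by simp
    then show "le u (lad v u (lad w v y)) z \<longleftrightarrow> le w y (res u w z)"
      using res_res[OF u v w wv vu z] by simp
  qed
qed

lemma ladj_id: "u \<in> Opn \<Longrightarrow> y \<in> F u \<Longrightarrow> lad u u y = y"
  by (rule ladj_unique) (simp_all add: res_id)

lemma res_top:
  assumes u: "u \<in> Opn" and v: "v \<in> Opn" and vu: "leO v u"
  shows "res u v (top_F u) = top_F v"
proof -
  obtain z where z: "z \<in> F u" and e: "top_F v = res u v z"
    using res_surj[OF u v vu] top_closed[OF complete_F[OF v]] by blast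
  have "le v (top_F v) (res u v (top_F u))"
    unfolding e
    using res_mono[OF u v vu z top_closed[OF complete_F[OF u]] le_top[OF complete_F[OF u] z]] .
  then show ?thesis
    using poset_on_antisym[OF poset_F[OF v]] res_closed[OF u v vu top_closed[OF complete_F[OF u]]]
      top_closed[OF complete_F[OF v]] le_top[OF complete_F[OF v]] by blast
qed

text \<open>Restriction preserves meets and joins, being a right and a left adjoint.\<close>
lemma res_meet:
  assumes u: "u \<in> Opn" and v: "v \<in> Opn" and vu: "leO v u" and x: "x \<in> F u" and y: "y \<in> F u"
  shows "res u v (meet (F u) (le u) x y) = meet (F v) (le v) (res u v x) (res u v y)"
proof (rule meet_eqI[OF poset_F[OF v], symmetric])
  note cF = complete_F[OF u] and m = meet_closed[OF complete_F[OF u] x y]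
  show "res u v (meet (F u) (le u) x y) \<in> F v" using res_closed[OF u v vu m] .
  show "le v (res u v (meet (F u) (le u) x y)) (res u v x)"
    using res_mono[OF u v vu m x meet_lower1[OF cF x y]] .
  show "le v (res u v (meet (F u) (le u) x y)) (res u v y)"
    using res_mono[OF u v vu m y meet_lower2[OF cF x y]] .
  fix w assume w: "w \<in> F v" "le v w (res u v x)" "le v w (res u v y)"
  then have "le u (lad v u w) (meet (F u) (le u) x y)"
    using ladj_le_iff[OF u v vu w(1)] x y by (simp add: le_meet_iff[OF cF] ladj_closed[OF u v vu])
  then show "le v w (res u v (meet (F u) (le u) x y))"
    using ladj_le_iff[OF u v vu w(1) m] by simp
qed

lemma res_lub:
  assumes u: "u \<in> Opn" and v: "v \<in> Opn" and vu: "leO v u" and S: "S \<subseteq> F u"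
  shows "res u v (lub (F u) (le u) S) = lub (F v) (le v) (res u v ` S)"
proof (rule lub_eqI[OF poset_F[OF v], symmetric])
  obtain r where "is_right_adjoint F le res v u r" using right_adjoint_exists[OF u v vu] by blast
  then have r: "\<And>y. y \<in> F v \<Longrightarrow> r y \<in> F u"
    and r_adj: "\<And>x y. x \<in> F u \<Longrightarrow> y \<in> F v \<Longrightarrow> le v (res u v x) y \<longleftrightarrow> le u x (r y)"
    unfolding is_right_adjoint_def by blast+
  note cF = complete_F[OF u] and l = lub_closed[OF complete_F[OF u] S]
  show "res u v (lub (F u) (le u) S) \<in> F v" using res_closed[OF u v vu l] .
  show "\<And>t. t \<in> res u v ` S \<Longrightarrow> le v t (res u v (lub (F u) (le u) S))"
    using res_mono[OF u v vu _ l lub_upper[OF cF S]] S by blast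
  fix y assume y: "y \<in> F v" and ub: "\<And>t. t \<in> res u v ` S \<Longrightarrow> le v t y"
  have "le u (lub (F u) (le u) S) (r y)"
    using ub r_adj y S by (intro lub_least[OF cF S r[OF y]]) blast
  then show "le v (res u v (lub (F u) (le u) S)) y" using r_adj[OF l y] by simp
qed

lemma ladj_lub:
  assumes u: "u \<in> Opn" and v: "v \<in> Opn" and vu: "leO v u" and S: "S \<subseteq> F v"
  shows "lad v u (lub (F v) (le v) S) = lub (F u) (le u) (lad v u ` S)"
proof (rule lub_eqI[OF poset_F[OF u], symmetric])
  note cF = complete_F[OF v] and l = lub_closed[OF complete_F[OF v] S]
  show "lad v u (lub (F v) (le v) S) \<in> F u" using ladj_closed[OF u v vu l] .
  show "\<And>t. t \<in> lad v u ` S \<Longrightarrow> le u t (lad v u (lub (F v) (le v) S))"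
    using ladj_mono[OF u v vu _ l lub_upper[OF cF S]] S by blast
  fix y assume y: "y \<in> F u" and ub: "\<And>t. t \<in> lad v u ` S \<Longrightarrow> le u t y"
  have "le v (lub (F v) (le v) S) (res u v y)"
    using ub ladj_le_iff[OF u v vu _ y] S by (intro lub_least[OF cF S res_closed[OF u v vu y]]) blast
  then show "le u (lad v u (lub (F v) (le v) S)) y" using ladj_le_iff[OF u v vu l y] by simp
qed

lemma glue_pair:
  assumes u: "u \<in> Opn" and v: "v \<in> Opn" and a: "a \<in> F u" and b: "b \<in> F v"
    and compatible: "res u (meet Opn leO u v) a = res v (meet Opn leO u v) b"
  obtains g where "g \<in> F (lub Opn leO {u, v})"
    and "res (lub Opn leO {u, v}) u g = a" and "res (lub Opn leO {u, v}) v g = b"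
proof -
  define s where "s z = (if z = u then a else b)" for z
  have sv: "s v = b"
  proof (cases "u = v")
    case True
    then show ?thesis using compatible u a b by (simp add: s_def meet_idem[OF complete_opens] res_id)
  qed (simp add: s_def)
  have uv: "{u, v} \<subseteq> Opn" using u v by blast
  have "\<forall>z\<in>{u, v}. s z \<in> F z" using a b sv by (auto simp: s_def)
  moreover have "\<forall>z\<in>{u, v}. \<forall>z'\<in>{u, v}.
      res z (meet Opn leO z z') (s z) = res z' (meet Opn leO z z') (s z')"
    using compatible sv by (auto simp: s_def meet_commute[of Opn leO v u])
  ultimately obtain g where "g \<in> F (lub Opn leO {u, v})" "\<forall>z\<in>{u, v}. res (lub Opn leO {u, v}) z g = s z"
    using glue[OF lub_closed[OF complete_opens uv] uv refl] by blast
  then show thesis using that sv by (simp add: s_def)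
qed

abbreviation "psi \<equiv> psi_hom Opn leO F le res"

lemma psi_eq: "psi u = lad u T (top_F u)"
  unfolding psi_hom_def ..

lemma psi_closed: "u \<in> Opn \<Longrightarrow> psi u \<in> F T"
  unfolding psi_eq using ladj_closed[OF T_closed _ le_T top_closed[OF complete_F]] .

lemma psi_le_iff: "u \<in> Opn \<Longrightarrow> x \<in> F T \<Longrightarrow> le T (psi u) x \<longleftrightarrow> le u (top_F u) (res T u x)"
  unfolding psi_eq using ladj_le_iff[OF T_closed _ le_T top_closed[OF complete_F]] .

lemma res_psi: "u \<in> Opn \<Longrightarrow> res T u (psi u) = top_F u"
  unfolding psi_eq using res_ladj[OF T_closed _ le_T top_closed[OF complete_F]] .

lemma psi_top: "psi T = top_of (F T) (le T)"
  unfolding psi_eq using ladj_id[OF T_closed top_closed[OF complete_F[OF T_closed]]] .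

lemma psi_mono:
  assumes u: "u \<in> Opn" and v: "v \<in> Opn" and vu: "leO v u"
  shows "le T (psi v) (psi u)"
proof -
  have l: "lad v u (top_F v) \<in> F u" using ladj_closed[OF u v vu top_closed[OF complete_F[OF v]]] .
  have "psi v = lad u T (lad v u (top_F v))"
    unfolding psi_eq
    using ladj_ladj[OF T_closed u v vu le_T[OF u] top_closed[OF complete_F[OF v]]] by simp
  then show ?thesis
    unfolding psi_eq using ladj_mono[OF T_closed u le_T[OF u] l top_closed[OF complete_F[OF u]]
        le_top[OF complete_F[OF u] l]] by simp
qed

lemma meet_psi:
  assumes u: "u \<in> Opn" and x: "x \<in> F T"
  shows "meet (F T) (le T) x (psi u) = lad u T (res T u x)"
  using frobenius[OF T_closed u le_T[OF u] x top_closed[OF complete_F[OF u]]]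
    meet_top[OF complete_F[OF u] res_closed[OF T_closed u le_T[OF u] x]] by (simp add: psi_eq)

lemma ladj_res_below_psi:
  assumes u: "u \<in> Opn" and x: "x \<in> F T" and x_le: "le T x (psi u)"
  shows "lad u T (res T u x) = x"
  using meet_psi[OF u x] meet_absorb1[OF complete_F[OF T_closed] x psi_closed[OF u] x_le] by simp

lemma psi_lub:
  assumes S: "S \<subseteq> Opn"
  shows "psi (lub Opn leO S) = lub (F T) (le T) (psi ` S)"
proof -
  define t where "t = lub Opn leO S"
  have t: "t \<in> Opn" unfolding t_def using lub_closed[OF complete_opens S] .
  have wt: "leO w t" if "w \<in> S" for w unfolding t_def using lub_upper[OF complete_opens S that] .
  have "lub (F T) (le T) (psi ` S) = psi t"
  proof (rule lub_eqI[OF poset_F[OF T_closed] psi_closed[OF t]])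
    show "\<And>s. s \<in> psi ` S \<Longrightarrow> le T s (psi t)" using psi_mono[OF t] wt S by blast
    fix y assume y: "y \<in> F T" and ub: "\<And>s. s \<in> psi ` S \<Longrightarrow> le T s y"
    have "le t (top_F t) (res T t y)"
    proof (rule separated[OF t S t_def[symmetric] top_closed[OF complete_F[OF t]]
          res_closed[OF T_closed t le_T[OF t] y]])
      fix w assume w: "w \<in> S"
      then have "w \<in> Opn" using S by blast
      then show "le w (res t w (top_F t)) (res t w (res T t y))"
        using ub[of "psi w"] w psi_le_iff[OF _ y] res_top[OF t _ wt[OF w]]
          res_res[OF T_closed t _ wt[OF w] le_T[OF t] y] by simp
    qed
    then show "le T (psi t) y" using psi_le_iff[OF t y] by simp
  qed
  then show ?thesis unfolding t_def by simp
qed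

text \<open>For \<open>w = u \<sqinter> v\<close>, glue \<open>\<top>\<^sub>u\<close> with \<open>l\<^bsub>w,v\<^esub>(\<top>\<^sub>w)\<close> to a section \<open>g\<close> over \<open>u \<squnion> v\<close>; then
  \<open>\<psi> u \<le> l(g)\<close>, and Frobenius reciprocity computes \<open>l(g) \<sqinter> \<psi> v = \<psi> w\<close>.\<close>
lemma meet_psi_le:
  assumes u: "u \<in> Opn" and v: "v \<in> Opn"
  shows "le T (meet (F T) (le T) (psi u) (psi v)) (psi (meet Opn leO u v))"
proof -
  define w where "w = meet Opn leO u v"
  define t where "t = lub Opn leO {u, v}"
  have w: "w \<in> Opn" and wu: "leO w u" and wv: "leO w v"
    unfolding w_def using meet_closed[OF complete_opens u v] meet_lower1[OF complete_opens u v]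
      meet_lower2[OF complete_opens u v] by blast+
  have uv: "{u, v} \<subseteq> Opn" using u v by blast
  have t: "t \<in> Opn" and ut: "leO u t" and vt: "leO v t"
    unfolding t_def using lub_closed[OF complete_opens uv] lub_upper[OF complete_opens uv] by blast+
  note top_u = top_closed[OF complete_F[OF u]] and top_w = top_closed[OF complete_F[OF w]]
  have b: "lad w v (top_F w) \<in> F v" using ladj_closed[OF v w wv top_w] .
  have "res u w (top_F u) = res v w (lad w v (top_F w))"
    using res_top[OF u w wu] res_ladj[OF v w wv top_w] by simp
  then obtain g where g: "g \<in> F t" and gu: "res t u g = top_F u" and gv: "res t v g = lad w v (top_F w)"
    using glue_pair[OF u v top_u b] unfolding t_def w_def by blast
  have lg: "lad t T g \<in> F T" using ladj_closed[OF T_closed t le_T[OF t] g] .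
  have "le t (lad u t (top_F u)) g"
    using ladj_le_iff[OF t u ut top_u g] gu poset_on_refl[OF poset_F[OF u] top_u] by simp
  then have "le T (psi u) (lad t T g)"
    using ladj_mono[OF T_closed t le_T[OF t] ladj_closed[OF t u ut top_u] g]
      ladj_ladj[OF T_closed t u ut le_T[OF t] top_u] by (simp add: psi_eq)
  then have "le T (meet (F T) (le T) (psi u) (psi v)) (meet (F T) (le T) (lad t T g) (psi v))"
    using meet_mono[OF complete_F[OF T_closed] psi_closed[OF u] lg psi_closed[OF v]] by blast
  moreover have "res T v (lad t T g) = lad w v (top_F w)"
    using res_res[OF T_closed t v vt le_T[OF t] lg] res_ladj[OF T_closed t le_T[OF t] g] gv by simp
  then have "meet (F T) (le T) (lad t T g) (psi v) = psi w"
    using meet_psi[OF v lg] ladj_ladj[OF T_closed v w wv le_T[OF v] top_w] by (simp add: psi_eq)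
  ultimately show ?thesis by (simp add: w_def)
qed

lemma psi_meet:
  assumes u: "u \<in> Opn" and v: "v \<in> Opn"
  shows "psi (meet Opn leO u v) = meet (F T) (le T) (psi u) (psi v)"
proof (rule poset_on_antisym[OF poset_F[OF T_closed]])
  note cT = complete_F[OF T_closed] and uv = meet_closed[OF complete_opens u v]
  show "le T (psi (meet Opn leO u v)) (meet (F T) (le T) (psi u) (psi v))"
    using psi_mono[OF u uv meet_lower1[OF complete_opens u v]]
      psi_mono[OF v uv meet_lower2[OF complete_opens u v]]
    by (simp add: le_meet_iff[OF cT] psi_closed u v uv)
qed (simp_all add: psi_closed meet_closed[OF complete_F[OF T_closed]] meet_psi_le u v
    meet_closed[OF complete_opens u v])

lemma frame_hom_psi: "frame_hom Opn leO (F T) (le T) psi"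
  unfolding frame_hom_def by (intro conjI ballI allI impI psi_closed psi_top psi_meet psi_lub)

lemma coslice_obj_psi: "coslice_obj Opn leO (F T) (le T) psi"
  unfolding coslice_obj_def using frame_F[OF T_closed] frame_hom_psi by blast

lemma frame_under_psi: "frame_under Opn leO (F T) (le T) psi"
  using opens_frame coslice_obj_psi by (rule frame_under.intro)

interpretation psi: frame_under Opn leO "F T" "le T" psi
  by (rule frame_under_psi)

abbreviation "D \<equiv> phi_F (F T) (le T) psi"
abbreviation "RD \<equiv> phi_res (F T) (le T) psi"

lemma top_D: "u \<in> Opn \<Longrightarrow> top_of (D u) (le T) = psi u"
  using psi.top_phi_F by (simp add: phi_le_def)

lemma meet_D: "u \<in> Opn \<Longrightarrow> x \<in> D u \<Longrightarrow> y \<in> D u \<Longrightarrow> meet (D u) (le T) x y = meet (F T) (le T) x y"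
  unfolding phi_F_def by (rule meet_downset[OF psi.complete_L psi.f_closed])

lemma lub_D: "u \<in> Opn \<Longrightarrow> S \<subseteq> D u \<Longrightarrow> lub (D u) (le T) S = lub (F T) (le T) S"
  unfolding phi_F_def by (rule lub_downset[OF psi.complete_L psi.f_closed])

lemma ladj_T_closed_D: "u \<in> Opn \<Longrightarrow> y \<in> F u \<Longrightarrow> lad u T y \<in> D u"
  using ladj_closed[OF T_closed _ le_T]
    ladj_mono[OF T_closed _ le_T _ top_closed[OF complete_F] le_top[OF complete_F]]
  by (simp add: psi.mem_phi_F psi_eq)

lemma res_ladj_T: "u \<in> Opn \<Longrightarrow> y \<in> F u \<Longrightarrow> res T u (lad u T y) = y"
  using res_ladj[OF T_closed _ le_T] .

lemma ladj_res_T: "u \<in> Opn \<Longrightarrow> x \<in> D u \<Longrightarrow> lad u T (res T u x) = x"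
  using ladj_res_below_psi by (simp add: psi.mem_phi_F)

lemma frame_hom_res_T: "u \<in> Opn \<Longrightarrow> frame_hom (D u) (le T) (F u) (le u) (res T u)"
  unfolding frame_hom_def
proof (intro conjI ballI allI impI)
  assume u: "u \<in> Opn"
  show "\<And>x. x \<in> D u \<Longrightarrow> res T u x \<in> F u"
    using res_closed[OF T_closed u le_T[OF u]] by (simp add: psi.mem_phi_F)
  show "res T u (top_of (D u) (le T)) = top_F u" using top_D[OF u] res_psi[OF u] by simp
  show "\<And>x y. x \<in> D u \<Longrightarrow> y \<in> D u \<Longrightarrow>
      res T u (meet (D u) (le T) x y) = meet (F u) (le u) (res T u x) (res T u y)"
    using meet_D[OF u] res_meet[OF T_closed u le_T[OF u]] by (simp add: psi.mem_phi_F)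
  show "\<And>S. S \<subseteq> D u \<Longrightarrow> res T u (lub (D u) (le T) S) = lub (F u) (le u) (res T u ` S)"
    using lub_D[OF u] res_lub[OF T_closed u le_T[OF u]] by (auto simp: psi.mem_phi_F subset_iff)
qed

lemma frame_hom_ladj_T: "u \<in> Opn \<Longrightarrow> frame_hom (F u) (le u) (D u) (le T) (lad u T)"
  unfolding frame_hom_def
proof (intro conjI ballI allI impI)
  assume u: "u \<in> Opn"
  show "\<And>y. y \<in> F u \<Longrightarrow> lad u T y \<in> D u" using ladj_T_closed_D[OF u] .
  show "lad u T (top_F u) = top_of (D u) (le T)" using top_D[OF u] by (simp add: psi_eq)
  fix x y assume x: "x \<in> F u" and y: "y \<in> F u"
  have lx: "lad u T x \<in> F T" using ladj_closed[OF T_closed u le_T[OF u] x] .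
  have "meet (D u) (le T) (lad u T x) (lad u T y) = meet (F T) (le T) (lad u T x) (lad u T y)"
    using meet_D[OF u ladj_T_closed_D[OF u x] ladj_T_closed_D[OF u y]] .
  also have "\<dots> = lad u T (meet (F u) (le u) x y)"
    using frobenius[OF T_closed u le_T[OF u] lx y] res_ladj_T[OF u x] by simp
  finally show "lad u T (meet (F u) (le u) x y) = meet (D u) (le T) (lad u T x) (lad u T y)" ..
next
  fix S assume u: "u \<in> Opn" and S: "S \<subseteq> F u"
  have "lad u T ` S \<subseteq> D u" using ladj_T_closed_D[OF u] S by blast
  then show "lad u T (lub (F u) (le u) S) = lub (D u) (le T) (lad u T ` S)"
    using lub_D[OF u] ladj_lub[OF T_closed u le_T[OF u] S] by simp
qed

lemma counit_frame_morphism: "frame_morphism Opn leO D (phi_le (le T)) RD F le res (\<lambda>u. res T u)"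
  unfolding frame_morphism_def
proof (intro conjI ballI impI)
  show "\<And>u. u \<in> Opn \<Longrightarrow> frame_hom (D u) (phi_le (le T) u) (F u) (le u) (res T u)"
    using frame_hom_res_T by (simp add: phi_le_def)
  show "\<And>u x. u \<in> Opn \<Longrightarrow> x \<in> D u \<Longrightarrow> res T u x \<in> F u"
    using res_closed[OF T_closed _ le_T] by (simp add: psi.mem_phi_F)
  fix u v assume u: "u \<in> Opn" and v: "v \<in> Opn" and vu: "leO v u"
  show "\<And>x. x \<in> D u \<Longrightarrow> res u v (res T u x) = res T v (RD u v x)"
    using res_meet[OF T_closed v le_T[OF v] _ psi_closed[OF v]] res_psi[OF v]
      meet_top[OF complete_F[OF v] res_closed[OF T_closed v le_T[OF v]]]
      res_res[OF T_closed u v vu le_T[OF u]]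
    by (simp add: psi.mem_phi_F phi_res_def)
  text \<open>In \<open>\<Phi>\<Psi>(F)\<close> the left adjoint is an inclusion, and \<open>y = l\<^bsub>u,1\<^esub>(l\<^bsub>v,u\<^esub>(y|\<^sub>v))\<close> for \<open>y \<le> \<psi> v\<close>.\<close>
  fix y assume y: "y \<in> D v"
  have yv: "res T v y \<in> F v" and y_eq: "lad v T (res T v y) = y"
    using res_closed[OF T_closed v le_T[OF v]] ladj_res_T[OF v y] y by (simp_all add: psi.mem_phi_F)
  have "res T u y = res T u (lad u T (lad v u (res T v y)))"
    using ladj_ladj[OF T_closed u v vu le_T[OF u] yv] y_eq by simp
  then show "res T u (ladj D (phi_le (le T)) RD v u y) = lad v u (res T v y)"
    using psi.ladj_phi[OF u v vu y] res_ladj_T[OF u ladj_closed[OF u v vu yv]] by simp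
qed

lemma counit_inverse_frame_morphism: "frame_morphism Opn leO F le res D (phi_le (le T)) RD (\<lambda>u. lad u T)"
  unfolding frame_morphism_def
proof (intro conjI ballI impI ladj_T_closed_D)
  show "\<And>u. u \<in> Opn \<Longrightarrow> frame_hom (F u) (le u) (D u) (phi_le (le T) u) (lad u T)"
    using frame_hom_ladj_T by (simp add: phi_le_def)
  fix u v assume u: "u \<in> Opn" and v: "v \<in> Opn" and vu: "leO v u"
  show "\<And>x. x \<in> F u \<Longrightarrow> RD u v (lad u T x) = lad v T (res u v x)"
    using meet_psi[OF v ladj_closed[OF T_closed u le_T[OF u]]]
      res_res[OF T_closed u v vu le_T[OF u] ladj_closed[OF T_closed u le_T[OF u]]] res_ladj_T[OF u]
    by (simp add: phi_res_def)
  show "\<And>y. y \<in> F v \<Longrightarrow> lad u T (lad v u y) = ladj D (phi_le (le T)) RD v u (lad v T y)"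
    using psi.ladj_phi[OF u v vu ladj_T_closed_D[OF v]] ladj_ladj[OF T_closed u v vu le_T[OF u]] by simp
qed

lemma counit_iso:
  "\<exists>\<beta>. frame_morphism Opn leO F le res D (phi_le (le T)) RD \<beta> \<and>
    (\<forall>u\<in>Opn. \<forall>x\<in>D u. \<beta> u (res T u x) = x) \<and> (\<forall>u\<in>Opn. \<forall>y\<in>F u. res T u (\<beta> u y) = y)"
  using counit_inverse_frame_morphism ladj_res_T res_ladj_T by blast

end

lemma coslice_mor_psi:
  assumes F: "frame_sheaf Opn leO F le res" and G: "frame_sheaf Opn leO G le' res'"
    and \<alpha>: "frame_morphism Opn leO F le res G le' res' \<alpha>"
  shows "coslice_mor Opn leO (F (top_of Opn leO)) (le (top_of Opn leO)) (psi_hom Opn leO F le res)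
    (G (top_of Opn leO)) (le' (top_of Opn leO)) (psi_hom Opn leO G le' res') (\<alpha> (top_of Opn leO))"
proof -
  interpret F: frame_sheaf Opn leO F le res by (rule F)
  interpret G: frame_sheaf Opn leO G le' res' by (rule G)
  have hom: "\<And>u. u \<in> Opn \<Longrightarrow> frame_hom (F u) (le u) (G u) (le' u) (\<alpha> u)"
    and ladj: "\<And>u v y. u \<in> Opn \<Longrightarrow> v \<in> Opn \<Longrightarrow> leO v u \<Longrightarrow> y \<in> F v \<Longrightarrow>
      \<alpha> u (F.lad v u y) = G.lad v u (\<alpha> v y)"
    using \<alpha> unfolding frame_morphism_def by blast+
  have "\<alpha> F.T (F.psi u) = G.psi u" if u: "u \<in> Opn" for u
    using ladj[OF F.T_closed u F.le_T[OF u] top_closed[OF F.complete_F[OF u]]] hom[OF u]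
    by (simp add: F.psi_eq G.psi_eq frame_hom_def)
  then show ?thesis unfolding coslice_mor_def using hom[OF F.T_closed] by blast
qed

lemma counit_natural:
  assumes F: "frame_sheaf Opn leO F le res" and \<alpha>: "frame_morphism Opn leO F le res G le' res' \<alpha>"
    and u: "u \<in> Opn"
    and x: "x \<in> phi_F (F (top_of Opn leO)) (le (top_of Opn leO)) (psi_hom Opn leO F le res) u"
  shows "res' (top_of Opn leO) u (\<alpha> (top_of Opn leO) x) = \<alpha> u (res (top_of Opn leO) u x)"
proof -
  interpret frame_sheaf Opn leO F le res by (rule F)
  show ?thesis using \<alpha> T_closed le_T[OF u] u x unfolding frame_morphism_def phi_F_def by blast
qed

theorem theorem3p1:
  fixes Opn :: "'o set" and leO :: "'o \<Rightarrow> 'o \<Rightarrow> bool"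
  assumes X: "frame_on Opn leO"
  shows
    \<comment> \<open>Phi is well defined on objects\<close>
    "(\<forall>(L :: 'a set) leL f. coslice_obj Opn leO L leL f \<longrightarrow>
        frame_sheaf_on Opn leO (phi_F L leL f) (phi_le leL) (phi_res L leL f)) \<and>
    \<comment> \<open>Phi is well defined on morphisms\<close>
     (\<forall>(L :: 'a set) leL f (M :: 'a set) leM g h.
        coslice_obj Opn leO L leL f \<and> coslice_obj Opn leO M leM g \<and>
        coslice_mor Opn leO L leL f M leM g h \<longrightarrow>
        frame_morphism Opn leO (phi_F L leL f) (phi_le leL) (phi_res L leL f)
                             (phi_F M leM g) (phi_le leM) (phi_res M leM g) (phi_mor h)) \<and>
    \<comment> \<open>Psi is well defined on objects\<close>
     (\<forall>(F :: 'o \<Rightarrow> 'a set) le res. frame_sheaf_on Opn leO F le res \<longrightarrow>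
        coslice_obj Opn leO (F (top_of Opn leO)) (le (top_of Opn leO)) (psi_hom Opn leO F le res)) \<and>
    \<comment> \<open>Psi is well defined on morphisms\<close>
     (\<forall>(F :: 'o \<Rightarrow> 'a set) le res (G :: 'o \<Rightarrow> 'a set) le' res' \<alpha>.
        frame_sheaf_on Opn leO F le res \<and> frame_sheaf_on Opn leO G le' res' \<and>
        frame_morphism Opn leO F le res G le' res' \<alpha> \<longrightarrow>
        coslice_mor Opn leO (F (top_of Opn leO)) (le (top_of Opn leO)) (psi_hom Opn leO F le res)
                          (G (top_of Opn leO)) (le' (top_of Opn leO)) (psi_hom Opn leO G le' res')
                          (\<alpha> (top_of Opn leO))) \<and>
    \<comment> \<open>natural isomorphism eta : Id \<Rightarrow> Psi Phi on Opn(X)/Frm\<close>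
     (\<exists>\<eta> :: 'a set \<Rightarrow> ('a \<Rightarrow> 'a \<Rightarrow> bool) \<Rightarrow> ('o \<Rightarrow> 'a) \<Rightarrow> 'a \<Rightarrow> 'a.
        (\<forall>L leL f. coslice_obj Opn leO L leL f \<longrightarrow>
           coslice_mor Opn leO L leL f
             (phi_F L leL f (top_of Opn leO)) (phi_le leL (top_of Opn leO))
             (psi_hom Opn leO (phi_F L leL f) (phi_le leL) (phi_res L leL f))
             (\<eta> L leL f) \<and>
           (\<exists>k. coslice_mor Opn leO
                  (phi_F L leL f (top_of Opn leO)) (phi_le leL (top_of Opn leO))
                  (psi_hom Opn leO (phi_F L leL f) (phi_le leL) (phi_res L leL f))
                  L leL f k \<and>
                (\<forall>x\<in>L. k (\<eta> L leL f x) = x) \<and>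
                (\<forall>y\<in>phi_F L leL f (top_of Opn leO). \<eta> L leL f (k y) = y))) \<and>
        (\<forall>L leL f M leM g h.
           coslice_obj Opn leO L leL f \<and> coslice_obj Opn leO M leM g \<and>
           coslice_mor Opn leO L leL f M leM g h \<longrightarrow>
           (\<forall>x\<in>L. \<eta> M leM g (h x) = phi_mor h (top_of Opn leO) (\<eta> L leL f x)))) \<and>
    \<comment> \<open>natural isomorphism eps : Phi Psi \<Rightarrow> Id on FrmSh(X)\<close>
     (\<exists>\<epsilon> :: ('o \<Rightarrow> 'a set) \<Rightarrow> ('o \<Rightarrow> 'a \<Rightarrow> 'a \<Rightarrow> bool) \<Rightarrow> ('o \<Rightarrow> 'o \<Rightarrow> 'a \<Rightarrow> 'a) \<Rightarrow> 'o \<Rightarrow> 'a \<Rightarrow> 'a.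
        (\<forall>F le res. frame_sheaf_on Opn leO F le res \<longrightarrow>
           frame_morphism Opn leO
             (phi_F (F (top_of Opn leO)) (le (top_of Opn leO)) (psi_hom Opn leO F le res))
             (phi_le (le (top_of Opn leO)))
             (phi_res (F (top_of Opn leO)) (le (top_of Opn leO)) (psi_hom Opn leO F le res))
             F le res (\<epsilon> F le res) \<and>
           (\<exists>\<beta>. frame_morphism Opn leO F le res
                  (phi_F (F (top_of Opn leO)) (le (top_of Opn leO)) (psi_hom Opn leO F le res))
                  (phi_le (le (top_of Opn leO)))
                  (phi_res (F (top_of Opn leO)) (le (top_of Opn leO)) (psi_hom Opn leO F le res))
                  \<beta> \<and>
                (\<forall>u\<in>Opn. \<forall>x\<in>phi_F (F (top_of Opn leO)) (le (top_of Opn leO)) (psi_hom Opn leO F le res) u.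
                   \<beta> u (\<epsilon> F le res u x) = x) \<and>
                (\<forall>u\<in>Opn. \<forall>y\<in>F u. \<epsilon> F le res u (\<beta> u y) = y))) \<and>
        (\<forall>F le res G le' res' \<alpha>.
           frame_sheaf_on Opn leO F le res \<and> frame_sheaf_on Opn leO G le' res' \<and>
           frame_morphism Opn leO F le res G le' res' \<alpha> \<longrightarrow>
           (\<forall>u\<in>Opn. \<forall>x\<in>phi_F (F (top_of Opn leO)) (le (top_of Opn leO)) (psi_hom Opn leO F le res) u.
              \<epsilon> G le' res' u (phi_mor (\<alpha> (top_of Opn leO)) u x) = \<alpha> u (\<epsilon> F le res u x))))"
proof -
  have frame_under_of: "frame_under Opn leO L leL f" if "coslice_obj Opn leO L leL f"
    for L :: "'a set" and leL f
    using X that by (rule frame_under.intro)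
  have frame_sheaf_of: "frame_sheaf Opn leO F le res" if "frame_sheaf_on Opn leO F le res"
    for F :: "'o \<Rightarrow> 'a set" and le res
    using X that by (rule frame_sheaf.intro)
  show ?thesis
    by (intro conjI allI impI ballI exI[of _ "\<lambda>L leL f x. x"] exI[of _ "\<lambda>x. x"]
        exI[of _ "\<lambda>F le res u. res (top_of Opn leO) u"]; (elim conjE)?)
      (simp_all add: phi_mor_def frame_under_of frame_sheaf_of
        frame_under.frame_sheaf_phi frame_morphism_phi_mor frame_sheaf.coslice_obj_psi coslice_mor_psi
        frame_under.unit_coslice_mor frame_under.unit_inverse_coslice_mor
        frame_sheaf.counit_frame_morphism frame_sheaf.counit_iso,
        rule counit_natural[OF frame_sheaf_of])
qed

end
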